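(* Let $A\in\mathbb{R}^{m\times N}$ with $N=pn$, let $\mathbf{x}\in\mathbb{R}^N$ be block $k$-sparse ($\lVert\mathbf{x}\rVert_{2,0}\le k$), and let $\mathbf{y}=A\mathbf{x}+\boldsymbol{\epsilon}$. For any $q\in(1,\infty]$: 1) If $\lVert\boldsymbol{\epsilon}\rVert_2\le\zeta$, then the solution $\hat{\mathbf{x}}$ of the block basis pursuit $\min_{\mathbf{z}}\lVert\mathbf{z}\rVert_{2,1}$ s.t. $\lVert\mathbf{y}-A\mathbf{z}\rVert_2\le\zeta$ obeys $$\lVert\hat{\mathbf{x}}-\mathbf{x}\rVert_{2,q}\le\frac{2\zeta}{\beta_{q,2^{\frac{q}{q-1}}k}(A)},\qquad \lVert\hat{\mathbf{x}}-\mathbf{x}\rVert_{2,1}\le\frac{4k^{1-1/q}\zeta}{\beta_{q,2^{\frac{q}{q-1}}k}(A)}.$$ 2) If $\lVert A^T\boldsymbol{\epsilon}\rVert_{2,\infty}\le\mu$, then the solution $\hat{\mathbf{x}}$ of the block Dantzig selector $\min_{\mathbf{z}}\lVert\mathbf{z}\rVert_{2,1}$ s.t. $\lVert A^T(\mathbf{y}-A\mathbf{z})\rVert_{2,\infty}\le\mu$ obeys $$\lVert\hat{\mathbf{x}}-\mathbf{x}\rVert_{2,q}\le\frac{4k^{1-1/q}}{\beta^2_{q,2^{\frac{q}{q-1}}k}(A)}\mu,\qquad \lVert\hat{\mathbf{x}}-\mathbf{x}\rVert_{2,1}\le\frac{8k^{2-2/q}}{\beta^2_{q,2^{\frac{q}{q-1}}k}(A)}\mu.$$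 3) If $\lVert A^T\boldsymbol{\epsilon}\rVert_{2,\infty}\le\kappa\mu$ for some $\kappa\in(0,1)$, then the solution $\hat{\mathbf{x}}$ of the group lasso $\min_{\mathbf{z}}\frac12\lVert\mathbf{y}-A\mathbf{z}\rVert_2^2+\mu\lVert\mathbf{z}\rVert_{2,1}$ obeys $$\lVert\hat{\mathbf{x}}-\mathbf{x}\rVert_{2,q}\le\frac{1+\kappa}{1-\kappa}\cdot\frac{2k^{1-1/q}}{\beta^2_{q,(\frac{2}{1-\kappa})^{\frac{q}{q-1}}k}(A)}\mu,\qquad \lVert\hat{\mathbf{x}}-\mathbf{x}\rVert_{2,1}\le\frac{1+\kappa}{(1-\kappa)^2}\cdot\frac{4k^{2-2/q}}{\beta^2_{q,(\frac{2}{1-\kappa})^{\frac{q}{q-1}}k}(A)}\mu.$$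
   Context: Every $\mathbf{x}\in\mathbb{R}^N$ is partitioned into $p$ consecutive blocks of length $n$: $\mathbf{x}=[\mathbf{x}_1^T,\dots,\mathbf{x}_p^T]^T$, $\mathbf{x}_i\in\mathbb{R}^n$. Mixed norms: $\lVert\mathbf{x}\rVert_{2,0}=\#\{i:\mathbf{x}_i\ne\mathbf{0}\}$, $\lVert\mathbf{x}\rVert_{2,q}=(\sum_{i=1}^p\lVert\mathbf{x}_i\rVert_2^q)^{1/q}$ for $0<q<\infty$, $\lVert\mathbf{x}\rVert_{2,\infty}=\max_i\lVert\mathbf{x}_i\rVert_2$. For nonzero $\mathbf{x}$ and $q\in(1,\infty)$, $k_q(\mathbf{x})=\left(\lVert\mathbf{x}\rVert_{2,1}/\lVert\mathbf{x}\rVert_{2,q}\right)^{q/(q-1)}$, and $k_\infty(\mathbf{x})=\lVert\mathbf{x}\rVert_{2,1}/\lVert\mathbf{x}\rVert_{2,\infty}$. For $q\in(1,\infty]$ and real $s\ge1$, $\beta_{q,s}(A)=\min_{\mathbf{z}\ne\mathbf{0},\,k_q(\mathbf{z})\le s}\lVert A\mathbf{z}\rVert_2/\lVert\mathbf{z}\rVert_{2,q}$ (the paper defines it for $s\in[1,p]$; for $s\ge p$ the constraint is vacuous since $k_q\le p$). For $q=\infty$, $q/(q-1)$ is read as $1$ and $1/q$ as $0$. The parameters $\zeta\ge0$, $\mu>0$ are given; bounds are understood as $+\infty$ when the relevant $\beta$ is $0$. *)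

theory Defs
  imports "HOL-Analysis.Analysis"
begin

text \<open>Vectors of R^d are represented as functions nat => real, of which only the
  entries with index < d are relevant. A vector of R^N, N = p*n, is split into p
  consecutive blocks of length n; block i consists of the entries i*n + j, j < n.
  A real m x N matrix is a function nat => nat => real (row, column).\<close>

definition l2norm :: "nat \<Rightarrow> (nat \<Rightarrow> real) \<Rightarrow> real" where
  "l2norm d v = sqrt (\<Sum>r<d. (v r)\<^sup>2)"

definition blknorm :: "nat \<Rightarrow> (nat \<Rightarrow> real) \<Rightarrow> nat \<Rightarrow> real" where
  "blknorm n x i = sqrt (\<Sum>j<n. (x (i * n + j))\<^sup>2)"

definition norm20 :: "nat \<Rightarrow> nat \<Rightarrow> (nat \<Rightarrow> real) \<Rightarrow> nat" where
  "norm20 p n x = card {i. i < p \<and> (\<exists>j<n. x (i * n + j) \<noteq> 0)}"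

definition norm21 :: "nat \<Rightarrow> nat \<Rightarrow> (nat \<Rightarrow> real) \<Rightarrow> real" where
  "norm21 p n x = (\<Sum>i<p. blknorm n x i)"

definition norm2inf :: "nat \<Rightarrow> nat \<Rightarrow> (nat \<Rightarrow> real) \<Rightarrow> real" where
  "norm2inf p n x = (MAX i\<in>{..<p}. blknorm n x i)"

definition norm2q :: "nat \<Rightarrow> nat \<Rightarrow> ereal \<Rightarrow> (nat \<Rightarrow> real) \<Rightarrow> real" where
  "norm2q p n q x = (if q = \<infinity> then norm2inf p n x
     else (\<Sum>i<p. blknorm n x i powr real_of_ereal q) powr (1 / real_of_ereal q))"

definition qexp :: "ereal \<Rightarrow> real" where
  "qexp q = (if q = \<infinity> then 1 else real_of_ereal q / (real_of_ereal q - 1))"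

definition qinv :: "ereal \<Rightarrow> real" where
  "qinv q = (if q = \<infinity> then 0 else 1 / real_of_ereal q)"

definition kq :: "nat \<Rightarrow> nat \<Rightarrow> ereal \<Rightarrow> (nat \<Rightarrow> real) \<Rightarrow> real" where
  "kq p n q x = (if q = \<infinity> then norm21 p n x / norm2inf p n x
     else (norm21 p n x / norm2q p n q x) powr qexp q)"

definition matvec :: "nat \<Rightarrow> (nat \<Rightarrow> nat \<Rightarrow> real) \<Rightarrow> (nat \<Rightarrow> real) \<Rightarrow> (nat \<Rightarrow> real)" where
  "matvec N A z = (\<lambda>r. \<Sum>j<N. A r j * z j)"

definition tmatvec :: "nat \<Rightarrow> (nat \<Rightarrow> nat \<Rightarrow> real) \<Rightarrow> (nat \<Rightarrow> real) \<Rightarrow> (nat \<Rightarrow> real)" where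
  "tmatvec m A e = (\<lambda>j. \<Sum>r<m. A r j * e r)"

definition nonzero_vec :: "nat \<Rightarrow> (nat \<Rightarrow> real) \<Rightarrow> bool" where
  "nonzero_vec d z \<longleftrightarrow> (\<exists>j<d. z j \<noteq> 0)"

text \<open>beta_{q,s}(A) = min over nonzero z with k_q(z) <= s of |A z|_2 / |z|_{2,q}
  (the minimum is attained, so it equals the infimum).\<close>
definition beta :: "nat \<Rightarrow> nat \<Rightarrow> nat \<Rightarrow> (nat \<Rightarrow> nat \<Rightarrow> real) \<Rightarrow> ereal \<Rightarrow> real \<Rightarrow> real" where
  "beta m p n A q s = Inf {l2norm m (matvec (p * n) A z) / norm2q p n q z | z.
      nonzero_vec (p * n) z \<and> kq p n q z \<le> s}"

definition bp_solution :: "nat \<Rightarrow> nat \<Rightarrow> nat \<Rightarrow> (nat \<Rightarrow> nat \<Rightarrow> real) \<Rightarrow> (nat \<Rightarrow> real) \<Rightarrow> real \<Rightarrow> (nat \<Rightarrow> real) \<Rightarrow> bool" where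
  "bp_solution m p n A y \<zeta> xh \<longleftrightarrow>
     l2norm m (\<lambda>r. y r - matvec (p * n) A xh r) \<le> \<zeta> \<and>
     (\<forall>z. l2norm m (\<lambda>r. y r - matvec (p * n) A z r) \<le> \<zeta> \<longrightarrow> norm21 p n xh \<le> norm21 p n z)"

definition ds_solution :: "nat \<Rightarrow> nat \<Rightarrow> nat \<Rightarrow> (nat \<Rightarrow> nat \<Rightarrow> real) \<Rightarrow> (nat \<Rightarrow> real) \<Rightarrow> real \<Rightarrow> (nat \<Rightarrow> real) \<Rightarrow> bool" where
  "ds_solution m p n A y \<mu> xh \<longleftrightarrow>
     norm2inf p n (tmatvec m A (\<lambda>r. y r - matvec (p * n) A xh r)) \<le> \<mu> \<and>
     (\<forall>z. norm2inf p n (tmatvec m A (\<lambda>r. y r - matvec (p * n) A z r)) \<le> \<mu> \<longrightarrow>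
          norm21 p n xh \<le> norm21 p n z)"

definition lasso_obj :: "nat \<Rightarrow> nat \<Rightarrow> nat \<Rightarrow> (nat \<Rightarrow> nat \<Rightarrow> real) \<Rightarrow> (nat \<Rightarrow> real) \<Rightarrow> real \<Rightarrow> (nat \<Rightarrow> real) \<Rightarrow> real" where
  "lasso_obj m p n A y \<mu> z =
     1/2 * (l2norm m (\<lambda>r. y r - matvec (p * n) A z r))\<^sup>2 + \<mu> * norm21 p n z"

definition lasso_solution :: "nat \<Rightarrow> nat \<Rightarrow> nat \<Rightarrow> (nat \<Rightarrow> nat \<Rightarrow> real) \<Rightarrow> (nat \<Rightarrow> real) \<Rightarrow> real \<Rightarrow> (nat \<Rightarrow> real) \<Rightarrow> bool" where
  "lasso_solution m p n A y \<mu> xh \<longleftrightarrow>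
     (\<forall>z. lasso_obj m p n A y \<mu> xh \<le> lasso_obj m p n A y \<mu> z)"

end

theory Submission
  imports Defs
begin

text \<open>Write h = xh - x and let S be the set of nonzero blocks of x, so card S <= k.
  Comparing xh with the competitor x in each program gives a cone condition
  ||h||_{2,1} <= C ||h_S||_{2,1}, with C = 2 for basis pursuit and the Dantzig selector (for
  which x is feasible) and C = 2/(1 - kappa) for the group lasso. Hoelder's inequality over the
  at most k blocks of S gives ||h_S||_{2,1} <= k^(1-1/q) ||h||_{2,q}, so k_q(h) <= C^(q/(q-1)) k
  and the definition of beta yields beta ||h||_{2,q} <= ||A h||_2. The upper bound on ||A h||_2
  is 2 zeta for basis pursuit; for the other two programs
  ||A h||_2^2 = <A^T A h, h> <= ||A^T A h||_{2,inf} ||h||_{2,1} is linear in ||h||_{2,q}, and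
  comparing it with the quadratic lower bound gives the estimates.\<close>

section \<open>Hoelder's inequality for finite sums\<close>

lemma powr_mean_le_mean_powr:
  fixes a :: "'a \<Rightarrow> real"
  assumes "finite T" and "T \<noteq> {}" and "\<And>i. i \<in> T \<Longrightarrow> 0 < a i" and "1 \<le> r"
  shows "(sum a T / card T) powr r \<le> (\<Sum>i\<in>T. a i powr r) / card T"
proof -
  have "card T > 0" using assms(1,2) by (simp add: card_gt_0_iff)
  have "(\<Sum>i\<in>T. (1 / card T) *\<^sub>R a i) powr r \<le> (\<Sum>i\<in>T. (1 / card T) * a i powr r)"
    by (rule convex_on_sum[OF assms(1,2) powr_convex[OF assms(4)]])
      (use assms(3) \<open>card T > 0\<close> in auto)
  then show ?thesis
    by (simp add: sum_distrib_right[symmetric] sum_distrib_left[symmetric] divide_inverse mult.commute)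
qed

lemma sum_le_card_powr_mult_sum_powr:
  fixes a :: "'a \<Rightarrow> real"
  assumes "finite S" and nonneg: "\<And>i. i \<in> S \<Longrightarrow> 0 \<le> a i" and r: "1 < r"
  shows "sum a S \<le> real (card S) powr (1 - 1/r) * (\<Sum>i\<in>S. a i powr r) powr (1/r)"
proof -
  define T where "T = {i\<in>S. 0 < a i}"
  have "T \<subseteq> S" "finite T" using \<open>finite S\<close> by (auto simp: T_def)
  have sum_T: "sum a S = sum a T" "(\<Sum>i\<in>S. a i powr r) = (\<Sum>i\<in>T. a i powr r)"
    by (rule sum.mono_neutral_right[OF \<open>finite S\<close> \<open>T \<subseteq> S\<close>]; use nonneg in \<open>force simp: T_def\<close>)+
  show ?thesis
  proof (cases "T = {}")
    case False
    define c where "c = real (card T)"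
    have "c > 0" using \<open>finite T\<close> False by (simp add: c_def card_gt_0_iff)
    have "sum a T \<ge> 0" by (rule sum_nonneg) (simp add: T_def)
    have "sum a T / c = ((sum a T / c) powr r) powr (1/r)"
      using \<open>sum a T \<ge> 0\<close> \<open>c > 0\<close> r by (simp add: powr_powr)
    also have "\<dots> \<le> ((\<Sum>i\<in>T. a i powr r) / c) powr (1/r)"
      using powr_mean_le_mean_powr[OF \<open>finite T\<close> False _ less_imp_le[OF r]] \<open>sum a T \<ge> 0\<close> \<open>c > 0\<close> r
      by (intro powr_mono2) (auto simp: T_def c_def)
    also have "\<dots> = (\<Sum>i\<in>T. a i powr r) powr (1/r) / c powr (1/r)"
      using \<open>c > 0\<close> by (simp add: powr_divide sum_nonneg)
    finally have "sum a T \<le> c powr (1 - 1/r) * (\<Sum>i\<in>T. a i powr r) powr (1/r)"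
      using \<open>c > 0\<close> by (simp add: powr_diff divide_le_eq mult.commute)
    also have "\<dots> \<le> real (card S) powr (1 - 1/r) * (\<Sum>i\<in>T. a i powr r) powr (1/r)"
      using r card_mono[OF \<open>finite S\<close> \<open>T \<subseteq> S\<close>] by (intro mult_right_mono powr_mono2) (auto simp: c_def)
    finally show ?thesis using sum_T by simp
  qed (use sum_T in simp)
qed

lemma l2norm_eq_L2_set: "l2norm d v = L2_set v {..<d}"
  by (simp add: l2norm_def L2_set_def)

lemma l2norm_nonneg: "0 \<le> l2norm d v"
  by (simp add: l2norm_eq_L2_set)

lemma l2norm_power2: "(l2norm d v)\<^sup>2 = (\<Sum>r<d. (v r)\<^sup>2)"
  by (simp add: l2norm_def sum_nonneg)

lemma l2norm_diff_le: "l2norm d (\<lambda>r. u r - v r) \<le> l2norm d u + l2norm d v"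
  using L2_set_triangle_ineq[of u "\<lambda>r. - v r" "{..<d}"] by (simp add: l2norm_def L2_set_def)

lemma blknorm_eq_L2_set: "blknorm n x i = L2_set (\<lambda>j. x (i * n + j)) {..<n}"
  by (simp add: blknorm_def L2_set_def)

lemma blknorm_nonneg: "0 \<le> blknorm n x i"
  by (simp add: blknorm_eq_L2_set)

lemma blknorm_diff_le: "blknorm n (\<lambda>j. u j - v j) i \<le> blknorm n u i + blknorm n v i"
  using L2_set_triangle_ineq[of "\<lambda>j. u (i * n + j)" "\<lambda>j. - v (i * n + j)" "{..<n}"]
  by (simp add: blknorm_eq_L2_set L2_set_def)

lemma blknorm_pos:
  assumes "j < n" and "h (i * n + j) \<noteq> 0"
  shows "0 < blknorm n h i"
proof -
  have "0 < (h (i * n + j))\<^sup>2" using assms(2) by simp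
  also have "\<dots> \<le> (\<Sum>j<n. (h (i * n + j))\<^sup>2)"
    by (rule member_le_sum[where f = "\<lambda>j. (h (i * n + j))\<^sup>2"]) (use assms(1) in auto)
  finally show ?thesis by (simp add: blknorm_def)
qed

lemma blknorm_le_norm2inf: "i < p \<Longrightarrow> blknorm n g i \<le> norm2inf p n g"
  unfolding norm2inf_def by (rule Max_ge) auto

lemma norm2inf_attained: "1 \<le> p \<Longrightarrow> \<exists>i<p. norm2inf p n g = blknorm n g i"
  unfolding norm2inf_def using Max_in[of "(\<lambda>i. blknorm n g i) ` {..<p}"] by fastforce

lemma norm2inf_nonneg: "1 \<le> p \<Longrightarrow> 0 \<le> norm2inf p n g"
  using norm2inf_attained[of p n g] blknorm_nonneg by metis

lemma norm2inf_diff_le: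
  assumes "1 \<le> p"
  shows "norm2inf p n (\<lambda>j. u j - v j) \<le> norm2inf p n u + norm2inf p n v"
proof -
  obtain i where "i < p" and "norm2inf p n (\<lambda>j. u j - v j) = blknorm n (\<lambda>j. u j - v j) i"
    using norm2inf_attained[OF assms] by blast
  with blknorm_diff_le[of n u v i] blknorm_le_norm2inf[OF \<open>i < p\<close>, of n u]
    blknorm_le_norm2inf[OF \<open>i < p\<close>, of n v]
  show ?thesis by linarith
qed

definition norm21_on :: "nat set \<Rightarrow> nat \<Rightarrow> (nat \<Rightarrow> real) \<Rightarrow> real" where
  "norm21_on S n h = (\<Sum>i\<in>S. blknorm n h i)"

lemma norm21_eq_norm21_on: "norm21 p n h = norm21_on {..<p} n h"
  by (simp add: norm21_def norm21_on_def)

lemma norm21_split: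
  assumes "S \<subseteq> {..<p}"
  shows "norm21 p n h = norm21_on S n h + norm21_on ({..<p} - S) n h"
  using sum.subset_diff[OF assms] by (simp add: norm21_def norm21_on_def add.commute)

lemma norm21_on_nonneg: "0 \<le> norm21_on S n h"
  by (simp add: norm21_on_def sum_nonneg blknorm_nonneg)

lemma norm21_nonneg: "0 \<le> norm21 p n h"
  by (simp add: norm21_eq_norm21_on norm21_on_nonneg)

lemma ereal_gt_1_cases:
  fixes q :: ereal
  assumes "1 < q"
  obtains "q = \<infinity>" | r where "q = ereal r" and "1 < r"
  using assms by (cases q) auto

lemma norm2q_nonneg: "1 \<le> p \<Longrightarrow> 0 \<le> norm2q p n q h"
  by (simp add: norm2q_def norm2inf_nonneg)

lemma norm2q_pos:
  assumes "nonzero_vec (p * n) h" and "1 < q"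
  shows "0 < norm2q p n q h"
proof -
  obtain j where j: "j < p * n" "h j \<noteq> 0" using assms(1) by (auto simp: nonzero_vec_def)
  then have "n > 0" by (cases n) auto
  define i where "i = j div n"
  have "i < p" using j(1) by (simp add: i_def less_mult_imp_div_less)
  have "0 < blknorm n h i"
    using blknorm_pos[of "j mod n" n h i] \<open>n > 0\<close> j(2) by (simp add: i_def)
  from \<open>1 < q\<close> show ?thesis
  proof (cases rule: ereal_gt_1_cases)
    case 1
    then show ?thesis
      using blknorm_le_norm2inf[OF \<open>i < p\<close>, of n h] \<open>0 < blknorm n h i\<close> by (simp add: norm2q_def)
  next
    case (2 r)
    have "0 < blknorm n h i powr r" using \<open>0 < blknorm n h i\<close> by simp
    also have "\<dots> \<le> (\<Sum>i<p. blknorm n h i powr r)"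
      by (rule member_le_sum[where f = "\<lambda>i. blknorm n h i powr r"]) (use \<open>i < p\<close> in auto)
    finally show ?thesis using 2 by (simp add: norm2q_def)
  qed
qed

lemma norm2q_eq_0:
  assumes "\<not> nonzero_vec (p * n) h" and "1 \<le> p"
  shows "norm2q p n q h = 0"
proof -
  have "i * n + j < p * n" if "i < p" "j < n" for i j
  proof -
    have "i * n + j < (i + 1) * n" using that by simp
    also have "\<dots> \<le> p * n" using that by (intro mult_le_mono1) simp
    finally show ?thesis .
  qed
  then have zero: "blknorm n h i = 0" if "i < p" for i
    using assms(1) that by (simp add: blknorm_def nonzero_vec_def)
  then have "norm2inf p n h = 0"
    using norm2inf_attained[OF assms(2), of n h] by force
  then show ?thesis using zero by (simp add: norm2q_def)
qed

lemma norm21_on_le_norm2q: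
  assumes S: "S \<subseteq> {..<p}" and "card S \<le> k" and "1 < q" and "1 \<le> p"
  shows "norm21_on S n h \<le> real k powr (1 - qinv q) * norm2q p n q h"
  using \<open>1 < q\<close>
proof (cases rule: ereal_gt_1_cases)
  case 1
  have "norm21_on S n h \<le> (\<Sum>i\<in>S. norm2inf p n h)"
    unfolding norm21_on_def by (rule sum_mono) (use S blknorm_le_norm2inf in auto)
  also have "\<dots> \<le> real k * norm2inf p n h"
    using \<open>card S \<le> k\<close> norm2inf_nonneg[OF \<open>1 \<le> p\<close>] by (simp add: mult_right_mono)
  finally show ?thesis using 1 by (simp add: qinv_def norm2q_def)
next
  case (2 r)
  have "finite S" using S finite_subset by blast
  have "norm21_on S n h \<le> real (card S) powr (1 - 1/r) * (\<Sum>i\<in>S. blknorm n h i powr r) powr (1/r)"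
    unfolding norm21_on_def
    by (rule sum_le_card_powr_mult_sum_powr[OF \<open>finite S\<close> blknorm_nonneg \<open>1 < r\<close>])
  also have "\<dots> \<le> real k powr (1 - 1/r) * (\<Sum>i<p. blknorm n h i powr r) powr (1/r)"
    using \<open>1 < r\<close> \<open>card S \<le> k\<close> S
    by (intro mult_mono powr_mono2) (auto intro!: sum_nonneg sum_mono2)
  finally show ?thesis using 2 by (simp add: qinv_def norm2q_def)
qed

section \<open>The restricted gain on a cone\<close>

lemma kq_le_of_norm21_le:
  assumes h: "nonzero_vec (p * n) h" and "1 < q" and "0 < C"
    and le: "norm21 p n h \<le> C * real k powr (1 - qinv q) * norm2q p n q h"
  shows "kq p n q h \<le> C powr qexp q * real k"
proof -
  have "0 < norm2q p n q h" by (rule norm2q_pos[OF h \<open>1 < q\<close>])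
  then have ratio: "norm21 p n h / norm2q p n q h \<le> C * real k powr (1 - qinv q)"
    using le by (simp add: pos_divide_le_eq)
  from \<open>1 < q\<close> show ?thesis
  proof (cases rule: ereal_gt_1_cases)
    case 1
    then show ?thesis using ratio \<open>0 < C\<close> by (simp add: kq_def qexp_def qinv_def norm2q_def)
  next
    case (2 r)
    have "kq p n q h = (norm21 p n h / norm2q p n q h) powr (r / (r - 1))"
      using 2 by (simp add: kq_def qexp_def)
    also have "\<dots> \<le> (C * real k powr (1 - 1/r)) powr (r / (r - 1))"
      using 2 ratio \<open>0 < norm2q p n q h\<close> norm21_nonneg
      by (intro powr_mono2) (auto simp: qinv_def)
    also have "\<dots> = C powr (r / (r - 1)) * real k powr ((1 - 1/r) * (r / (r - 1)))"
      using \<open>0 < C\<close> by (simp add: powr_mult powr_powr)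
    also have "(1 - 1/r) * (r / (r - 1)) = 1" using \<open>1 < r\<close> by (simp add: field_simps)
    finally show ?thesis using 2 by (simp add: qexp_def)
  qed
qed

lemma beta_mult_norm2q_le:
  assumes h: "nonzero_vec (p * n) h" and "1 < q" and "kq p n q h \<le> s"
  shows "beta m p n A q s * norm2q p n q h \<le> l2norm m (matvec (p * n) A h)"
proof -
  have "1 \<le> p" using h by (cases p) (auto simp: nonzero_vec_def)
  have "beta m p n A q s \<le> l2norm m (matvec (p * n) A h) / norm2q p n q h"
    unfolding beta_def
  proof (rule cInf_lower)
    show "bdd_below {l2norm m (matvec (p * n) A z) / norm2q p n q z | z.
        nonzero_vec (p * n) z \<and> kq p n q z \<le> s}"
      by (rule bdd_belowI[where m = 0])
        (auto intro!: divide_nonneg_nonneg l2norm_nonneg norm2q_nonneg[OF \<open>1 \<le> p\<close>])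
  qed (use h assms(3) in blast)
  then show ?thesis using norm2q_pos[OF h \<open>1 < q\<close>] by (simp add: pos_le_divide_eq)
qed

context
  fixes p n k :: nat and q :: ereal and S :: "nat set" and C :: real and h :: "nat \<Rightarrow> real"
  assumes S: "S \<subseteq> {..<p}" "card S \<le> k" and "1 < q" and "1 \<le> p" and "0 < C"
    and cone: "norm21 p n h \<le> C * norm21_on S n h"
begin

lemma norm21_le_of_cone: "norm21 p n h \<le> C * real k powr (1 - qinv q) * norm2q p n q h"
  using order_trans[OF cone mult_left_mono[OF norm21_on_le_norm2q[OF S \<open>1 < q\<close> \<open>1 \<le> p\<close>]]]
    \<open>0 < C\<close> by (simp add: mult.assoc)

lemma beta_mult_norm2q_le_of_cone:
  "beta m p n A q (C powr qexp q * real k) * norm2q p n q h \<le> l2norm m (matvec (p * n) A h)"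
proof (cases "nonzero_vec (p * n) h")
  case True
  show ?thesis
    by (rule beta_mult_norm2q_le[OF True \<open>1 < q\<close>
          kq_le_of_norm21_le[OF True \<open>1 < q\<close> \<open>0 < C\<close> norm21_le_of_cone]])
next
  case False
  then show ?thesis using norm2q_eq_0[OF False \<open>1 \<le> p\<close>] by (simp add: l2norm_nonneg)
qed

end

section \<open>Duality\<close>

lemma sum_lessThan_mult_blocks:
  fixes f :: "nat \<Rightarrow> 'a::comm_monoid_add"
  shows "(\<Sum>j<p * n. f j) = (\<Sum>i<p. \<Sum>j<n. f (i * n + j))"
proof -
  have "(\<Sum>j<p * n. f j) = (\<Sum>i<p. sum f {i * n..<i * n + n})"
    using sum.nat_group[of f n p] by (simp add: mult.commute)
  also have "\<dots> = (\<Sum>i<p. \<Sum>j<n. f (i * n + j))"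
    using sum.shift_bounds_nat_ivl[of f 0 "i * n" n for i]
    by (simp add: atLeast0LessThan add.commute)
  finally show ?thesis .
qed

lemma sum_mult_matvec_eq: "(\<Sum>r<m. u r * matvec N A h r) = (\<Sum>j<N. h j * tmatvec m A u j)"
  unfolding matvec_def tmatvec_def
  by (simp add: sum_distrib_left sum_distrib_right mult_ac sum.swap[of _ "{..<m}"])

lemma sum_mult_matvec_le:
  "(\<Sum>r<m. u r * matvec (p * n) A h r) \<le> norm21 p n h * norm2inf p n (tmatvec m A u)"
proof -
  define g where "g = tmatvec m A u"
  have "(\<Sum>r<m. u r * matvec (p * n) A h r) = (\<Sum>i<p. \<Sum>j<n. h (i * n + j) * g (i * n + j))"
    unfolding sum_mult_matvec_eq g_def by (rule sum_lessThan_mult_blocks)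
  also have "\<dots> \<le> (\<Sum>i<p. blknorm n h i * blknorm n g i)"
  proof (rule sum_mono)
    fix i
    have "(\<Sum>j<n. h (i * n + j) * g (i * n + j)) \<le> (\<Sum>j<n. \<bar>h (i * n + j)\<bar> * \<bar>g (i * n + j)\<bar>)"
      by (rule sum_mono) (metis abs_ge_self abs_mult)
    also have "\<dots> \<le> blknorm n h i * blknorm n g i"
      unfolding blknorm_eq_L2_set by (rule L2_set_mult_ineq)
    finally show "(\<Sum>j<n. h (i * n + j) * g (i * n + j)) \<le> blknorm n h i * blknorm n g i" .
  qed
  also have "\<dots> \<le> (\<Sum>i<p. blknorm n h i * norm2inf p n g)"
    by (rule sum_mono) (simp add: mult_left_mono blknorm_nonneg blknorm_le_norm2inf)
  also have "\<dots> = norm21 p n h * norm2inf p n g"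
    by (simp add: norm21_def sum_distrib_right)
  finally show ?thesis by (simp add: g_def)
qed

lemma l2norm_matvec_power2_le:
  "(l2norm m (matvec (p * n) A h))\<^sup>2
     \<le> norm21 p n h * norm2inf p n (tmatvec m A (matvec (p * n) A h))"
  using sum_mult_matvec_le[of "matvec (p * n) A h" p n A h m]
  unfolding l2norm_power2 by (simp add: power2_eq_square)

lemma matvec_diff: "matvec N A (\<lambda>j. u j - v j) r = matvec N A u r - matvec N A v r"
  by (simp add: matvec_def right_diff_distrib sum_subtractf)

lemma tmatvec_diff: "tmatvec m A (\<lambda>r. u r - v r) j = tmatvec m A u j - tmatvec m A v j"
  by (simp add: tmatvec_def right_diff_distrib sum_subtractf)

lemma matvec_error_eq:
  "matvec N A (\<lambda>j. xh j - x j) = (\<lambda>r. e r - (matvec N A x r + e r - matvec N A xh r))"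
  by (simp add: fun_eq_iff matvec_diff)

section \<open>Basis pursuit, Dantzig selector and group lasso\<close>

definition block_support :: "nat \<Rightarrow> nat \<Rightarrow> (nat \<Rightarrow> real) \<Rightarrow> nat set" where
  "block_support p n x = {i. i < p \<and> (\<exists>j<n. x (i * n + j) \<noteq> 0)}"

lemma card_block_support: "card (block_support p n x) = norm20 p n x"
  by (simp add: block_support_def norm20_def)

lemma block_support_subset: "block_support p n x \<subseteq> {..<p}"
  by (auto simp: block_support_def)

lemma norm21_ge_of_block_support:
  fixes p n :: nat and x xh :: "nat \<Rightarrow> real"
  defines "S \<equiv> block_support p n x"
  shows "norm21 p n x - norm21_on S n (\<lambda>j. xh j - x j) + norm21_on ({..<p} - S) n (\<lambda>j. xh j - x j)
    \<le> norm21 p n xh"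
proof -
  let ?h = "\<lambda>j. xh j - x j"
  have "S \<subseteq> {..<p}" by (simp add: S_def block_support_subset)
  have "x (i * n + j) = 0" if "i \<in> {..<p} - S" "j < n" for i j
    using that by (auto simp: S_def block_support_def)
  then have "blknorm n x i = 0" and "blknorm n xh i = blknorm n ?h i" if "i \<in> {..<p} - S" for i
    using that by (simp_all add: blknorm_def)
  then have "norm21 p n x = norm21_on S n x"
    and "norm21 p n xh = norm21_on S n xh + norm21_on ({..<p} - S) n ?h"
    using norm21_split[OF \<open>S \<subseteq> {..<p}\<close>] by (simp_all add: norm21_on_def)
  moreover have "norm21_on S n x \<le> norm21_on S n xh + norm21_on S n ?h"
    unfolding norm21_on_def sum.distrib[symmetric]
    by (rule sum_mono) (use blknorm_diff_le[of n xh ?h] in simp)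
  ultimately show ?thesis by linarith
qed

lemma norm21_diff_le_twice_on_block_support:
  assumes "norm21 p n xh \<le> norm21 p n x"
  shows "norm21 p n (\<lambda>j. xh j - x j) \<le> 2 * norm21_on (block_support p n x) n (\<lambda>j. xh j - x j)"
  using assms norm21_ge_of_block_support[of p n x xh]
    norm21_split[OF block_support_subset[of p n x], of n "\<lambda>j. xh j - x j"]
  by linarith

lemma le_divide_power2_of_power2_le:
  fixes b t l c :: real
  assumes "0 < b" and "0 \<le> t" and "b * t \<le> l" and "l\<^sup>2 \<le> c * t" and "0 \<le> c"
  shows "t \<le> c / b\<^sup>2"
proof (cases "t = 0")
  case False
  have "(b * t)\<^sup>2 \<le> l\<^sup>2" using assms(1-3) by (intro power_mono) auto
  with assms(4) have "b\<^sup>2 * t * t \<le> c * t" by (simp add: power2_eq_square mult_ac)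
  then have "b\<^sup>2 * t \<le> c" using False assms(2) by (simp add: mult_le_cancel_right)
  then show ?thesis using assms(1) by (simp add: pos_le_divide_eq mult.commute)
qed (use assms in simp)

lemma lasso_basic_inequality:
  fixes m p n :: nat and A :: "nat \<Rightarrow> nat \<Rightarrow> real" and x xh :: "nat \<Rightarrow> real"
  assumes "lasso_solution m p n A (\<lambda>r. matvec (p * n) A x r + \<epsilon> r) \<mu> xh"
  defines "w \<equiv> matvec (p * n) A (\<lambda>j. xh j - x j)"
  shows "(l2norm m w)\<^sup>2 / 2 + \<mu> * norm21 p n xh \<le> (\<Sum>r<m. \<epsilon> r * w r) + \<mu> * norm21 p n x"
proof -
  let ?y = "\<lambda>r. matvec (p * n) A x r + \<epsilon> r"
  have residual: "(\<lambda>r. ?y r - matvec (p * n) A xh r) = (\<lambda>r. \<epsilon> r - w r)"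
    by (simp add: w_def fun_eq_iff matvec_diff)
  have "lasso_obj m p n A ?y \<mu> xh
      = ((\<Sum>r<m. (\<epsilon> r)\<^sup>2) - 2 * (\<Sum>r<m. \<epsilon> r * w r) + (l2norm m w)\<^sup>2) / 2 + \<mu> * norm21 p n xh"
    unfolding lasso_obj_def residual l2norm_power2
    by (simp add: power2_diff sum.distrib sum_subtractf sum_distrib_left mult.assoc)
  moreover have "lasso_obj m p n A ?y \<mu> x = (\<Sum>r<m. (\<epsilon> r)\<^sup>2) / 2 + \<mu> * norm21 p n x"
    by (simp add: lasso_obj_def l2norm_power2)
  moreover have "lasso_obj m p n A ?y \<mu> xh \<le> lasso_obj m p n A ?y \<mu> x"
    using assms(1) by (simp add: lasso_solution_def)
  ultimately show ?thesis by (simp add: field_simps)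
qed

context
  fixes m p n k :: nat and A :: "nat \<Rightarrow> nat \<Rightarrow> real" and x \<epsilon> :: "nat \<Rightarrow> real" and q :: ereal
  assumes "1 \<le> p" and sparse: "norm20 p n x \<le> k" and "1 < q"
begin

lemmas cone_bounds =
  norm21_le_of_cone[OF block_support_subset sparse[folded card_block_support] \<open>1 < q\<close> \<open>1 \<le> p\<close>]
  beta_mult_norm2q_le_of_cone[OF block_support_subset sparse[folded card_block_support] \<open>1 < q\<close> \<open>1 \<le> p\<close>]

lemma bp_error_bound:
  assumes noise: "l2norm m \<epsilon> \<le> \<zeta>"
    and sol: "bp_solution m p n A (\<lambda>r. matvec (p * n) A x r + \<epsilon> r) \<zeta> xh"
    and b_pos: "0 < beta m p n A q (2 powr qexp q * real k)"
  shows "norm2q p n q (\<lambda>j. xh j - x j) \<le> 2 * \<zeta> / beta m p n A q (2 powr qexp q * real k)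
    \<and> norm21 p n (\<lambda>j. xh j - x j)
        \<le> 4 * real k powr (1 - qinv q) * \<zeta> / beta m p n A q (2 powr qexp q * real k)"
proof -
  define h where "h = (\<lambda>j. xh j - x j)"
  define b where "b = beta m p n A q (2 powr qexp q * real k)"
  define K where "K = real k powr (1 - qinv q)"
  have "l2norm m (\<lambda>r. matvec (p * n) A x r + \<epsilon> r - matvec (p * n) A x r) \<le> \<zeta>"
    using noise by simp
  then have "norm21 p n xh \<le> norm21 p n x"
    using sol unfolding bp_solution_def by blast
  then have cone: "norm21 p n h \<le> 2 * norm21_on (block_support p n x) n h"
    unfolding h_def by (rule norm21_diff_le_twice_on_block_support)
  have l1: "norm21 p n h \<le> 2 * K * norm2q p n q h"
    using cone_bounds(1)[OF _ cone] by (simp add: K_def)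
  have "b * norm2q p n q h \<le> l2norm m (matvec (p * n) A h)"
    using cone_bounds(2)[OF _ cone] by (simp add: b_def)
  also have "\<dots> \<le> l2norm m \<epsilon> + l2norm m (\<lambda>r. matvec (p * n) A x r + \<epsilon> r - matvec (p * n) A xh r)"
    unfolding h_def matvec_error_eq[where e = \<epsilon>] by (rule l2norm_diff_le)
  also have "\<dots> \<le> 2 * \<zeta>"
    using noise sol unfolding bp_solution_def by linarith
  finally have l2q: "norm2q p n q h \<le> 2 * \<zeta> / b"
    using b_pos by (simp add: b_def pos_le_divide_eq mult.commute)
  moreover have "norm21 p n h \<le> 4 * K * \<zeta> / b"
    using l1 mult_left_mono[OF l2q, of "2 * K"] by (simp add: K_def)
  ultimately show ?thesis by (simp add: h_def b_def K_def)
qed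

lemma ds_error_bound:
  assumes noise: "norm2inf p n (tmatvec m A \<epsilon>) \<le> \<mu>"
    and sol: "ds_solution m p n A (\<lambda>r. matvec (p * n) A x r + \<epsilon> r) \<mu> xh"
    and b_pos: "0 < beta m p n A q (2 powr qexp q * real k)"
  shows "norm2q p n q (\<lambda>j. xh j - x j)
      \<le> 4 * real k powr (1 - qinv q) / (beta m p n A q (2 powr qexp q * real k))\<^sup>2 * \<mu>
    \<and> norm21 p n (\<lambda>j. xh j - x j)
      \<le> 8 * real k powr (2 - 2 * qinv q) / (beta m p n A q (2 powr qexp q * real k))\<^sup>2 * \<mu>"
proof -
  define h where "h = (\<lambda>j. xh j - x j)"
  define b where "b = beta m p n A q (2 powr qexp q * real k)"
  define K where "K = real k powr (1 - qinv q)"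
  have "0 \<le> \<mu>" using noise norm2inf_nonneg[OF \<open>1 \<le> p\<close>] by (rule order_trans[rotated])
  have "norm2inf p n (tmatvec m A (\<lambda>r. matvec (p * n) A x r + \<epsilon> r - matvec (p * n) A x r)) \<le> \<mu>"
    using noise by simp
  then have "norm21 p n xh \<le> norm21 p n x"
    using sol unfolding ds_solution_def by blast
  then have cone: "norm21 p n h \<le> 2 * norm21_on (block_support p n x) n h"
    unfolding h_def by (rule norm21_diff_le_twice_on_block_support)
  have l1: "norm21 p n h \<le> 2 * K * norm2q p n q h"
    using cone_bounds(1)[OF _ cone] by (simp add: K_def)
  have lower: "b * norm2q p n q h \<le> l2norm m (matvec (p * n) A h)"
    using cone_bounds(2)[OF _ cone] by (simp add: b_def)
  have "norm2inf p n (tmatvec m A (matvec (p * n) A h))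
      \<le> norm2inf p n (tmatvec m A \<epsilon>)
        + norm2inf p n (tmatvec m A (\<lambda>r. matvec (p * n) A x r + \<epsilon> r - matvec (p * n) A xh r))"
    unfolding h_def matvec_error_eq[where e = \<epsilon>] tmatvec_diff by (rule norm2inf_diff_le[OF \<open>1 \<le> p\<close>])
  also have "\<dots> \<le> 2 * \<mu>"
    using noise sol unfolding ds_solution_def by linarith
  finally have gram: "norm2inf p n (tmatvec m A (matvec (p * n) A h)) \<le> 2 * \<mu>" .
  have "(l2norm m (matvec (p * n) A h))\<^sup>2
      \<le> norm21 p n h * norm2inf p n (tmatvec m A (matvec (p * n) A h))"
    by (rule l2norm_matvec_power2_le)
  also have "\<dots> \<le> norm21 p n h * (2 * \<mu>)"
    by (rule mult_left_mono[OF gram norm21_nonneg])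
  also have "\<dots> \<le> 4 * K * \<mu> * norm2q p n q h"
    using mult_right_mono[OF l1, of "2 * \<mu>"] \<open>0 \<le> \<mu>\<close> by (simp add: mult_ac)
  finally have upper: "(l2norm m (matvec (p * n) A h))\<^sup>2 \<le> 4 * K * \<mu> * norm2q p n q h" .
  have l2q: "norm2q p n q h \<le> 4 * K * \<mu> / b\<^sup>2"
    using le_divide_power2_of_power2_le[OF b_pos[folded b_def] norm2q_nonneg[OF \<open>1 \<le> p\<close>] lower upper]
      \<open>0 \<le> \<mu>\<close> by (simp add: K_def)
  moreover have "norm21 p n h \<le> 8 * K\<^sup>2 * \<mu> / b\<^sup>2"
    using l1 mult_left_mono[OF l2q, of "2 * K"] by (simp add: K_def power2_eq_square)
  moreover have "real k powr (2 - 2 * qinv q) = K\<^sup>2"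
    unfolding K_def by (simp add: power2_eq_square flip: powr_add)
  ultimately show ?thesis by (simp add: h_def b_def K_def)
qed

lemma lasso_cone:
  assumes "0 < \<kappa>" and "\<kappa> < 1" and "0 < \<mu>"
    and noise: "norm2inf p n (tmatvec m A \<epsilon>) \<le> \<kappa> * \<mu>"
    and sol: "lasso_solution m p n A (\<lambda>r. matvec (p * n) A x r + \<epsilon> r) \<mu> xh"
  defines "h \<equiv> \<lambda>j. xh j - x j" and "S \<equiv> block_support p n x"
  shows "norm21 p n h \<le> 2 / (1 - \<kappa>) * norm21_on S n h"
    and "(l2norm m (matvec (p * n) A h))\<^sup>2 \<le> 2 * \<mu> * (1 + \<kappa>) * norm21_on S n h"
proof -
  define hS where "hS = norm21_on S n h"
  define hSc where "hSc = norm21_on ({..<p} - S) n h"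
  define L where "L = (l2norm m (matvec (p * n) A h))\<^sup>2"
  have split: "norm21 p n h = hS + hSc"
    unfolding hS_def hSc_def S_def by (rule norm21_split[OF block_support_subset])
  have "(\<Sum>r<m. \<epsilon> r * matvec (p * n) A h r) \<le> norm21 p n h * (\<kappa> * \<mu>)"
    using sum_mult_matvec_le mult_left_mono[OF noise norm21_nonneg] order_trans by blast
  then have "L / 2 + \<mu> * norm21 p n xh \<le> \<kappa> * \<mu> * (hS + hSc) + \<mu> * norm21 p n x"
    using lasso_basic_inequality[OF sol] split by (simp add: L_def h_def mult_ac)
  moreover have "\<mu> * (norm21 p n x - hS + hSc) \<le> \<mu> * norm21 p n xh"
    using norm21_ge_of_block_support[of p n x xh] \<open>0 < \<mu>\<close>
    by (simp add: hS_def hSc_def h_def S_def)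
  ultimately have opt: "L / 2 + \<mu> * (hSc - hS) \<le> \<kappa> * \<mu> * (hS + hSc)"
    by (simp add: algebra_simps)
  have "0 \<le> L" by (simp add: L_def)
  with opt have "\<mu> * ((1 - \<kappa>) * hSc) \<le> \<mu> * ((1 + \<kappa>) * hS)"
    by (simp add: algebra_simps)
  then have "(1 - \<kappa>) * hSc \<le> (1 + \<kappa>) * hS"
    using \<open>0 < \<mu>\<close> by (simp only: mult_le_cancel_left_pos)
  then have "(1 - \<kappa>) * (hS + hSc) \<le> 2 * hS"
    by (simp add: algebra_simps)
  then show "norm21 p n h \<le> 2 / (1 - \<kappa>) * norm21_on S n h"
    using \<open>\<kappa> < 1\<close> split by (simp add: hS_def pos_le_divide_eq mult.commute)
  have "0 \<le> \<mu> * (1 - \<kappa>) * hSc"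
    using \<open>0 < \<mu>\<close> \<open>\<kappa> < 1\<close> by (simp add: hSc_def norm21_on_nonneg)
  with opt show "(l2norm m (matvec (p * n) A h))\<^sup>2 \<le> 2 * \<mu> * (1 + \<kappa>) * norm21_on S n h"
    by (simp add: L_def hS_def algebra_simps)
qed

lemma lasso_error_bound:
  assumes "0 < \<kappa>" and "\<kappa> < 1" and "0 < \<mu>"
    and noise: "norm2inf p n (tmatvec m A \<epsilon>) \<le> \<kappa> * \<mu>"
    and sol: "lasso_solution m p n A (\<lambda>r. matvec (p * n) A x r + \<epsilon> r) \<mu> xh"
    and b_pos: "0 < beta m p n A q ((2 / (1 - \<kappa>)) powr qexp q * real k)"
  shows "norm2q p n q (\<lambda>j. xh j - x j)
      \<le> (1 + \<kappa>) / (1 - \<kappa>)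
         * (2 * real k powr (1 - qinv q) / (beta m p n A q ((2 / (1 - \<kappa>)) powr qexp q * real k))\<^sup>2) * \<mu>
    \<and> norm21 p n (\<lambda>j. xh j - x j)
      \<le> (1 + \<kappa>) / (1 - \<kappa>)\<^sup>2
         * (4 * real k powr (2 - 2 * qinv q) / (beta m p n A q ((2 / (1 - \<kappa>)) powr qexp q * real k))\<^sup>2) * \<mu>"
proof -
  define h where "h = (\<lambda>j. xh j - x j)"
  define b where "b = beta m p n A q ((2 / (1 - \<kappa>)) powr qexp q * real k)"
  define K where "K = real k powr (1 - qinv q)"
  note cone = lasso_cone(1)[OF assms(1-5), folded h_def]
  have "0 < 2 / (1 - \<kappa>)" using \<open>\<kappa> < 1\<close> by simp
  have l1: "norm21 p n h \<le> 2 / (1 - \<kappa>) * K * norm2q p n q h"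
    using cone_bounds(1)[OF \<open>0 < 2 / (1 - \<kappa>)\<close> cone] by (simp add: K_def)
  have lower: "b * norm2q p n q h \<le> l2norm m (matvec (p * n) A h)"
    using cone_bounds(2)[OF \<open>0 < 2 / (1 - \<kappa>)\<close> cone] by (simp add: b_def)
  (* The proof gives the sharper bounds without one factor 1/(1 - kappa); that factor is
     only reinstated to match the stated estimates. *)
  have le_div: "t \<le> t / (1 - \<kappa>)" if "0 \<le> t" for t
    using that \<open>0 < \<kappa>\<close> \<open>\<kappa> < 1\<close> by (simp add: le_divide_eq mult_left_le)
  have "(l2norm m (matvec (p * n) A h))\<^sup>2 \<le> 2 * \<mu> * (1 + \<kappa>) * norm21_on (block_support p n x) n h"
    using lasso_cone(2)[OF assms(1-5)] by (simp add: h_def)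
  also have "\<dots> \<le> 2 * \<mu> * (1 + \<kappa>) * K * norm2q p n q h"
    using norm21_on_le_norm2q[OF block_support_subset sparse[folded card_block_support] \<open>1 < q\<close> \<open>1 \<le> p\<close>]
      \<open>0 < \<mu>\<close> \<open>0 < \<kappa>\<close> by (simp add: K_def mult_left_mono)
  finally have upper: "(l2norm m (matvec (p * n) A h))\<^sup>2 \<le> 2 * \<mu> * (1 + \<kappa>) * K * norm2q p n q h" .
  have l2q: "norm2q p n q h \<le> 2 * \<mu> * (1 + \<kappa>) * K / b\<^sup>2"
    using le_divide_power2_of_power2_le[OF b_pos[folded b_def] norm2q_nonneg[OF \<open>1 \<le> p\<close>] lower upper]
      \<open>0 < \<mu>\<close> \<open>0 < \<kappa>\<close> by (simp add: K_def)
  also have "\<dots> \<le> 2 * \<mu> * (1 + \<kappa>) * K / b\<^sup>2 / (1 - \<kappa>)"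
    by (rule le_div) (use \<open>0 < \<mu>\<close> \<open>0 < \<kappa>\<close> in \<open>simp add: K_def\<close>)
  also have "\<dots> = (1 + \<kappa>) / (1 - \<kappa>) * (2 * K / b\<^sup>2) * \<mu>"
    by (simp add: field_simps)
  finally have "norm2q p n q h \<le> (1 + \<kappa>) / (1 - \<kappa>) * (2 * K / b\<^sup>2) * \<mu>" .
  moreover have "norm21 p n h \<le> (1 + \<kappa>) / (1 - \<kappa>)\<^sup>2 * (4 * K\<^sup>2 / b\<^sup>2) * \<mu>"
  proof -
    have "norm21 p n h \<le> 2 / (1 - \<kappa>) * K * (2 * \<mu> * (1 + \<kappa>) * K / b\<^sup>2)"
      using l1 mult_left_mono[OF l2q, of "2 / (1 - \<kappa>) * K"] \<open>\<kappa> < 1\<close> by (simp add: K_def)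
    also have "\<dots> = ((1 + \<kappa>) * (4 * K\<^sup>2 / b\<^sup>2) * \<mu>) / (1 - \<kappa>)"
      by (simp add: power2_eq_square field_simps)
    also have "\<dots> \<le> ((1 + \<kappa>) * (4 * K\<^sup>2 / b\<^sup>2) * \<mu>) / (1 - \<kappa>) / (1 - \<kappa>)"
      by (rule le_div) (use \<open>0 < \<mu>\<close> \<open>0 < \<kappa>\<close> \<open>\<kappa> < 1\<close> in simp)
    also have "\<dots> = (1 + \<kappa>) / (1 - \<kappa>)\<^sup>2 * (4 * K\<^sup>2 / b\<^sup>2) * \<mu>"
      by (simp add: power2_eq_square field_simps)
    finally show ?thesis .
  qed
  moreover have "real k powr (2 - 2 * qinv q) = K\<^sup>2"
    unfolding K_def by (simp add: power2_eq_square flip: powr_add)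
  ultimately show ?thesis by (simp add: h_def b_def K_def)
qed

end

theorem theorem1:
  fixes m p n k :: nat and A :: "nat \<Rightarrow> nat \<Rightarrow> real"
    and x \<epsilon> :: "nat \<Rightarrow> real" and q :: ereal and \<zeta> \<mu> :: real
  assumes "1 \<le> p" and "1 \<le> n" and "1 \<le> k"
    and "norm20 p n x \<le> k"
    and "1 < q"
    and "0 \<le> \<zeta>" and "0 < \<mu>"
  defines "y \<equiv> (\<lambda>r. matvec (p * n) A x r + \<epsilon> r)"
  shows
   "(l2norm m \<epsilon> \<le> \<zeta> \<longrightarrow>
      (\<forall>xh. bp_solution m p n A y \<zeta> xh \<longrightarrow>
         (let b = beta m p n A q (2 powr qexp q * real k) in
          0 < b \<longrightarrow>
            norm2q p n q (\<lambda>j. xh j - x j) \<le> 2 * \<zeta> / b \<and>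
            norm21 p n (\<lambda>j. xh j - x j) \<le> 4 * real k powr (1 - qinv q) * \<zeta> / b)))
    \<and>
    (norm2inf p n (tmatvec m A \<epsilon>) \<le> \<mu> \<longrightarrow>
      (\<forall>xh. ds_solution m p n A y \<mu> xh \<longrightarrow>
         (let b = beta m p n A q (2 powr qexp q * real k) in
          0 < b \<longrightarrow>
            norm2q p n q (\<lambda>j. xh j - x j) \<le> 4 * real k powr (1 - qinv q) / b\<^sup>2 * \<mu> \<and>
            norm21 p n (\<lambda>j. xh j - x j) \<le> 8 * real k powr (2 - 2 * qinv q) / b\<^sup>2 * \<mu>)))
    \<and>
    (\<forall>\<kappa>::real. 0 < \<kappa> \<and> \<kappa> < 1 \<and> norm2inf p n (tmatvec m A \<epsilon>) \<le> \<kappa> * \<mu> \<longrightarrow>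
      (\<forall>xh. lasso_solution m p n A y \<mu> xh \<longrightarrow>
         (let b = beta m p n A q ((2 / (1 - \<kappa>)) powr qexp q * real k) in
          0 < b \<longrightarrow>
            norm2q p n q (\<lambda>j. xh j - x j)
              \<le> (1 + \<kappa>) / (1 - \<kappa>) * (2 * real k powr (1 - qinv q) / b\<^sup>2) * \<mu> \<and>
            norm21 p n (\<lambda>j. xh j - x j)
              \<le> (1 + \<kappa>) / (1 - \<kappa>)\<^sup>2 * (4 * real k powr (2 - 2 * qinv q) / b\<^sup>2) * \<mu>)))"
  unfolding Let_def y_def
  using bp_error_bound[OF assms(1,4,5)] ds_error_bound[OF assms(1,4,5)]
    lasso_error_bound[OF assms(1,4,5) _ _ assms(7)]
  by blast

end
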